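(* Let $(\mathfrak{h},[\,,\,],* )$ be a right Post-Lie algebra, let $(A_+,\cdot)$ be a non-unital associative algebra with a linear map $\rhd:A_+\otimes A_+\to A_+$, and let $\phi:\mathfrak{h}\to A_+$ be linear with $\phi([x,y])=\phi(x)\phi(y)-\phi(y)\phi(x)$ and $\phi(x*y)=\phi(x)\rhd\phi(y)$ for all $x,y\in\mathfrak{h}$. Let $A=\mathbb{K}1\oplus A_+$ be the unitization and extend $\rhd$ bilinearly to $A$ by $1\rhd x=0$, $x\rhd 1=x$ for $x\in A_+$, and $1\rhd 1=1$. Assume that for all $x,y$ in the subalgebra $\langle\mathrm{im}(\phi)\rangle$ of $A$ generated by $\mathrm{im}(\phi)$ and all $z\in\mathrm{im}(\phi)$: $(x\cdot y)\rhd z=(x\rhd z)\cdot y+x\cdot(y\rhd z)$ and $x\rhd(y\cdot z)=(x\rhd y)\rhd z-x\rhd(y\rhd z)$. Then there exists a unique algebra morphism $\Phi:\mathcal{U}(\mathfrak{h})\to A$ with $\Phi|_{\mathfrak{h}}=\phi$, and it satisfies for all $f,g,h\in\mathcal{U}(\mathfrak{h})$: $\Phi(f*g)=\Phi(f)\rhd\Phi(g)$; $(\Phi(f)\cdot\Phi(g))\rhd\Phi(h)=(\Phi(f)\rhd\Phi(h^{(1)}))\cdot(\Phi(g)\rhd\Phi(h^{(2)}))$; $(\Phi(f)\rhd\Phi(g))\rhd\Phi(h)=\Phi(f)\rhd\big((\Phi(g)\rhd\Phi(h^{(1)}))\cdot\Phi(h^{(2)})\big)$, where $*$ on $\mathcal{U}(\mathfrak{h})$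 is the extension described below.
   Context: A right Post-Lie algebra is a Lie algebra $(\mathfrak{h},[\,,\,])$ with bilinear $*$ such that $x*[y,z]=a_*(x,y,z)-a_*(x,z,y)$ and $[x,y]*z=[x*z,y]+[x,y*z]$, where $a_*(x,y,z)=(x*y)*z-x*(y*z)$. $\mathcal{U}(\mathfrak{h})$ is the enveloping algebra with coproduct $\Delta$ (elements of $\mathfrak{h}$ primitive), Sweedler notation $\Delta(h)=h^{(1)}\otimes h^{(2)}$. Extension (known fact): $*$ extends uniquely to $\mathcal{U}(\mathfrak{h})\otimes\mathcal{U}(\mathfrak{h})\to\mathcal{U}(\mathfrak{h})$ such that for all $f,g,h\in\mathcal{U}(\mathfrak{h})$, $y\in\mathfrak{h}$: $\varepsilon(f*g)=\varepsilon(f)\varepsilon(g)$; $\Delta(f*g)=\Delta(f)*\Delta(g)$; $f*1=f$; $1*f=\varepsilon(f)1$; $f*(gy)=(f*g)*y-f*(g*y)$; $(fg)*h=(f*h^{(1)})(g*h^{(2)})$; $(f*g)*h=f*\big((g*h^{(1)})h^{(2)}\big)$. *)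

theory Defs
  imports Complex_Main
begin

definition bilin ::
  "('k::field \<Rightarrow> 'a::ab_group_add \<Rightarrow> 'a) \<Rightarrow> ('k \<Rightarrow> 'b::ab_group_add \<Rightarrow> 'b)
   \<Rightarrow> ('k \<Rightarrow> 'c::ab_group_add \<Rightarrow> 'c) \<Rightarrow> ('a \<Rightarrow> 'b \<Rightarrow> 'c) \<Rightarrow> bool" where
  "bilin s1 s2 s3 f \<longleftrightarrow>
     (\<forall>x. Vector_Spaces.linear s2 s3 (f x)) \<and> (\<forall>y. Vector_Spaces.linear s1 s3 (\<lambda>x. f x y))"

definition lie_algebra ::
  "('k::field \<Rightarrow> 'h::ab_group_add \<Rightarrow> 'h) \<Rightarrow> ('h \<Rightarrow> 'h \<Rightarrow> 'h) \<Rightarrow> bool" where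
  "lie_algebra sh br \<longleftrightarrow> vector_space sh \<and> bilin sh sh sh br \<and>
     (\<forall>x. br x x = 0) \<and>
     (\<forall>x y z. br x (br y z) + br y (br z x) + br z (br x y) = 0)"

definition assoc_star :: "('h \<Rightarrow> 'h \<Rightarrow> 'h) \<Rightarrow> 'h \<Rightarrow> 'h \<Rightarrow> 'h \<Rightarrow> 'h::ab_group_add" where
  "assoc_star st x y z = st (st x y) z - st x (st y z)"

definition right_post_lie ::
  "('k::field \<Rightarrow> 'h::ab_group_add \<Rightarrow> 'h) \<Rightarrow> ('h \<Rightarrow> 'h \<Rightarrow> 'h) \<Rightarrow> ('h \<Rightarrow> 'h \<Rightarrow> 'h) \<Rightarrow> bool" where
  "right_post_lie sh br st \<longleftrightarrow> lie_algebra sh br \<and> bilin sh sh sh st \<and>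
     (\<forall>x y z. st x (br y z) = assoc_star st x y z - assoc_star st x z y) \<and>
     (\<forall>x y z. st (br x y) z = br (st x z) y + br x (st y z))"

definition nonunital_algebra :: "('k::field \<Rightarrow> 'a::ring \<Rightarrow> 'a) \<Rightarrow> bool" where
  "nonunital_algebra sa \<longleftrightarrow> vector_space sa \<and>
     (\<forall>c x y. sa c (x * y) = sa c x * y \<and> sa c (x * y) = x * sa c y)"

section \<open>The unitization A = K1 \<oplus> A_+, represented as pairs (c, x) meaning c 1 + x\<close>

type_synonym ('k, 'a) unitz = "'k \<times> 'a"

definition uz_one :: "('k::field, 'a::ring) unitz" where "uz_one = (1, 0)"
definition uz_zero :: "('k::field, 'a::ring) unitz" where "uz_zero = (0, 0)"
definition uz_incl :: "'a::ring \<Rightarrow> ('k::field, 'a) unitz" where "uz_incl x = (0, x)"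
definition uz_add :: "('k::field, 'a::ring) unitz \<Rightarrow> ('k, 'a) unitz \<Rightarrow> ('k, 'a) unitz" where
  "uz_add p q = (fst p + fst q, snd p + snd q)"
definition uz_sub :: "('k::field, 'a::ring) unitz \<Rightarrow> ('k, 'a) unitz \<Rightarrow> ('k, 'a) unitz" where
  "uz_sub p q = (fst p - fst q, snd p - snd q)"
definition uz_scale :: "('k::field \<Rightarrow> 'a::ring \<Rightarrow> 'a) \<Rightarrow> 'k \<Rightarrow> ('k, 'a) unitz \<Rightarrow> ('k, 'a) unitz" where
  "uz_scale sa c p = (c * fst p, sa c (snd p))"
text \<open>(c1 + x)(d1 + y) = cd 1 + (c y + d x + x y)\<close>
definition uz_mul :: "('k::field \<Rightarrow> 'a::ring \<Rightarrow> 'a) \<Rightarrow> ('k, 'a) unitz \<Rightarrow> ('k, 'a) unitz \<Rightarrow> ('k, 'a) unitz" where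
  "uz_mul sa p q = (fst p * fst q, sa (fst p) (snd q) + sa (fst q) (snd p) + snd p * snd q)"
text \<open>Bilinear extension of the product rhd with 1 rhd x = 0, x rhd 1 = x, 1 rhd 1 = 1:
  (c1 + x) rhd (d1 + y) = cd 1 + (d x + x rhd y).\<close>
definition uz_rhd :: "('k::field \<Rightarrow> 'a::ring \<Rightarrow> 'a) \<Rightarrow> ('a \<Rightarrow> 'a \<Rightarrow> 'a)
    \<Rightarrow> ('k, 'a) unitz \<Rightarrow> ('k, 'a) unitz \<Rightarrow> ('k, 'a) unitz" where
  "uz_rhd sa rhd p q = (fst p * fst q, sa (fst q) (snd p) + rhd (snd p) (snd q))"

definition uz_sum :: "('k::field, 'a::ring) unitz list \<Rightarrow> ('k, 'a) unitz" where
  "uz_sum ps = foldr uz_add ps uz_zero"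

inductive_set gen_subalg :: "('k::field \<Rightarrow> 'a::ring \<Rightarrow> 'a) \<Rightarrow> ('h \<Rightarrow> 'a) \<Rightarrow> ('k, 'a) unitz set"
  for sa phi where
  one: "uz_one \<in> gen_subalg sa phi"
| gen: "uz_incl (phi x) \<in> gen_subalg sa phi"
| add: "p \<in> gen_subalg sa phi \<Longrightarrow> q \<in> gen_subalg sa phi \<Longrightarrow> uz_add p q \<in> gen_subalg sa phi"
| scale: "p \<in> gen_subalg sa phi \<Longrightarrow> uz_scale sa c p \<in> gen_subalg sa phi"
| mul: "p \<in> gen_subalg sa phi \<Longrightarrow> q \<in> gen_subalg sa phi \<Longrightarrow> uz_mul sa p q \<in> gen_subalg sa phi"

datatype ('k, 'h) uterm = Gen 'h | One | Zero | Add "('k, 'h) uterm" "('k, 'h) uterm"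
  | Smul 'k "('k, 'h) uterm" | Mul "('k, 'h) uterm" "('k, 'h) uterm"

text \<open>U(h) = T(h) / (x y - y x - [x,y]): the congruence generated by the axioms of a
  unital associative K-algebra, linearity of the generator map, and the Lie relation.\<close>
inductive ueq :: "('k::field \<Rightarrow> 'h::ab_group_add \<Rightarrow> 'h) \<Rightarrow> ('h \<Rightarrow> 'h \<Rightarrow> 'h)
    \<Rightarrow> ('k, 'h) uterm \<Rightarrow> ('k, 'h) uterm \<Rightarrow> bool" for sh br where
  refl: "ueq sh br s s"
| sym: "ueq sh br s t \<Longrightarrow> ueq sh br t s"
| trans: "ueq sh br s t \<Longrightarrow> ueq sh br t u \<Longrightarrow> ueq sh br s u"
| cong_add: "ueq sh br s s' \<Longrightarrow> ueq sh br t t' \<Longrightarrow> ueq sh br (Add s t) (Add s' t')"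
| cong_smul: "ueq sh br s s' \<Longrightarrow> ueq sh br (Smul c s) (Smul c s')"
| cong_mul: "ueq sh br s s' \<Longrightarrow> ueq sh br t t' \<Longrightarrow> ueq sh br (Mul s t) (Mul s' t')"
| add_assoc: "ueq sh br (Add (Add s t) u) (Add s (Add t u))"
| add_comm: "ueq sh br (Add s t) (Add t s)"
| add_zero: "ueq sh br (Add s Zero) s"
| add_neg: "ueq sh br (Add s (Smul (-1) s)) Zero"
| smul_add: "ueq sh br (Smul c (Add s t)) (Add (Smul c s) (Smul c t))"
| add_smul: "ueq sh br (Smul (c + d) s) (Add (Smul c s) (Smul d s))"
| smul_smul: "ueq sh br (Smul c (Smul d s)) (Smul (c * d) s)"
| smul_one: "ueq sh br (Smul 1 s) s"
| mul_assoc: "ueq sh br (Mul (Mul s t) u) (Mul s (Mul t u))"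
| one_mul: "ueq sh br (Mul One s) s"
| mul_one: "ueq sh br (Mul s One) s"
| distl: "ueq sh br (Mul s (Add t u)) (Add (Mul s t) (Mul s u))"
| distr: "ueq sh br (Mul (Add s t) u) (Add (Mul s u) (Mul t u))"
| smul_mul: "ueq sh br (Mul (Smul c s) t) (Smul c (Mul s t))"
| mul_smul: "ueq sh br (Mul s (Smul c t)) (Smul c (Mul s t))"
| gen_add: "ueq sh br (Gen (x + y)) (Add (Gen x) (Gen y))"
| gen_smul: "ueq sh br (Gen (sh c x)) (Smul c (Gen x))"
| lie: "ueq sh br (Gen (br x y)) (Add (Mul (Gen x) (Gen y)) (Smul (-1) (Mul (Gen y) (Gen x))))"

fun usum :: "('k, 'h) uterm list \<Rightarrow> ('k, 'h) uterm" where
  "usum [] = Zero"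
| "usum (t # ts) = Add t (usum ts)"

primrec ueps :: "('k::field, 'h) uterm \<Rightarrow> 'k" where
  "ueps (Gen x) = 0"
| "ueps One = 1"
| "ueps Zero = 0"
| "ueps (Add s t) = ueps s + ueps t"
| "ueps (Smul c s) = c * ueps s"
| "ueps (Mul s t) = ueps s * ueps t"

text \<open>Coproduct Delta (algebra morphism, elements of h primitive), represented by a
  formal sum of simple tensors: ucop t = [(a1,b1),...] stands for sum_i a_i \<otimes> b_i,
  i.e. the Sweedler sum t^(1) \<otimes> t^(2).\<close>
primrec ucop :: "('k::field, 'h) uterm \<Rightarrow> (('k, 'h) uterm \<times> ('k, 'h) uterm) list" where
  "ucop (Gen x) = [(Gen x, One), (One, Gen x)]"
| "ucop One = [(One, One)]"
| "ucop Zero = []"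
| "ucop (Add s t) = ucop s @ ucop t"
| "ucop (Smul c s) = map (\<lambda>(a, b). (Smul c a, b)) (ucop s)"
| "ucop (Mul s t) = concat (map (\<lambda>(a, b). map (\<lambda>(c, d). (Mul a c, Mul b d)) (ucop t)) (ucop s))"

text \<open>The extension of the post-Lie product st to U(h) (a known fact: it exists and is
  unique with these properties); S is any operation on terms that is well defined on U(h),
  bilinear, extends st on generators and satisfies the listed identities.\<close>
definition ustar_ext :: "('k::field \<Rightarrow> 'h::ab_group_add \<Rightarrow> 'h) \<Rightarrow> ('h \<Rightarrow> 'h \<Rightarrow> 'h) \<Rightarrow> ('h \<Rightarrow> 'h \<Rightarrow> 'h)
    \<Rightarrow> (('k, 'h) uterm \<Rightarrow> ('k, 'h) uterm \<Rightarrow> ('k, 'h) uterm) \<Rightarrow> bool" where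
  "ustar_ext sh br st S \<longleftrightarrow>
     (\<forall>f f' g g'. ueq sh br f f' \<longrightarrow> ueq sh br g g' \<longrightarrow> ueq sh br (S f g) (S f' g')) \<and>
     (\<forall>f f' g. ueq sh br (S (Add f f') g) (Add (S f g) (S f' g))) \<and>
     (\<forall>f g g'. ueq sh br (S f (Add g g')) (Add (S f g) (S f g'))) \<and>
     (\<forall>c f g. ueq sh br (S (Smul c f) g) (Smul c (S f g))) \<and>
     (\<forall>c f g. ueq sh br (S f (Smul c g)) (Smul c (S f g))) \<and>
     (\<forall>x y. ueq sh br (S (Gen x) (Gen y)) (Gen (st x y))) \<and>
     (\<forall>f g. ueps (S f g) = ueps f * ueps g) \<and>
     (\<forall>f. ueq sh br (S f One) f) \<and>
     (\<forall>f. ueq sh br (S One f) (Smul (ueps f) One)) \<and>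
     (\<forall>f g y. ueq sh br (S f (Mul g (Gen y)))
                 (Add (S (S f g) (Gen y)) (Smul (-1) (S f (S g (Gen y)))))) \<and>
     (\<forall>f g h. ueq sh br (S (Mul f g) h)
                 (usum (map (\<lambda>(a, b). Mul (S f a) (S g b)) (ucop h)))) \<and>
     (\<forall>f g h. ueq sh br (S (S f g) h)
                 (S f (usum (map (\<lambda>(a, b). Mul (S g a) b) (ucop h)))))"

definition U_alg_hom :: "('k::field \<Rightarrow> 'h::ab_group_add \<Rightarrow> 'h) \<Rightarrow> ('h \<Rightarrow> 'h \<Rightarrow> 'h)
    \<Rightarrow> ('k \<Rightarrow> 'a::ring \<Rightarrow> 'a) \<Rightarrow> (('k, 'h) uterm \<Rightarrow> ('k, 'a) unitz) \<Rightarrow> bool" where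
  "U_alg_hom sh br sa F \<longleftrightarrow>
     (\<forall>s t. ueq sh br s t \<longrightarrow> F s = F t) \<and>
     F One = uz_one \<and> F Zero = uz_zero \<and>
     (\<forall>s t. F (Add s t) = uz_add (F s) (F t)) \<and>
     (\<forall>c s. F (Smul c s) = uz_scale sa c (F s)) \<and>
     (\<forall>s t. F (Mul s t) = uz_mul sa (F s) (F t))"

end

theory Submission
  imports Defs
begin

text \<open>The morphism \<Phi> is evaluation of terms: it respects the defining relations of U(h)
  and is forced on generators. For \<Phi>(f * g) = \<Phi> f \<rhd> \<Phi> g one inducts on g. For a
  generator y one inducts on f, products being handled by the first hypothesis (a Leibniz
  rule) and the rule (f g) * y = (f * y) g + f (g * y). Passing from g to g y uses
  f * (g y) = (f * g) * y - f * (g * y) and the second hypothesis; it needs the claim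
  for g * y, which is not a subterm of g but has no larger degree, so the induction
  runs on the degree. The remaining two identities are images under \<Phi> of the
  corresponding identities in U(h).\<close>

primrec ueval :: "('k::field \<Rightarrow> 'a::ring \<Rightarrow> 'a) \<Rightarrow> ('h \<Rightarrow> 'a) \<Rightarrow> ('k, 'h) uterm \<Rightarrow> ('k, 'a) unitz" where
  "ueval sa phi (Gen x) = uz_incl (phi x)"
| "ueval sa phi One = uz_one"
| "ueval sa phi Zero = uz_zero"
| "ueval sa phi (Add s t) = uz_add (ueval sa phi s) (ueval sa phi t)"
| "ueval sa phi (Smul c s) = uz_scale sa c (ueval sa phi s)"
| "ueval sa phi (Mul s t) = uz_mul sa (ueval sa phi s) (ueval sa phi t)"

primrec udeg :: "('k, 'h) uterm \<Rightarrow> nat" where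
  "udeg (Gen x) = 1"
| "udeg One = 0"
| "udeg Zero = 0"
| "udeg (Add s t) = max (udeg s) (udeg t)"
| "udeg (Smul c s) = udeg s"
| "udeg (Mul s t) = udeg s + udeg t"

lemmas uz_defs = uz_add_def uz_mul_def uz_scale_def uz_one_def uz_zero_def uz_incl_def
  uz_rhd_def uz_sub_def

lemma fst_ueval: "fst (ueval sa phi t) = ueps t"
  by (induction t) (auto simp: uz_defs)

lemma ueval_usum: "ueval sa phi (usum ts) = uz_sum (map (ueval sa phi) ts)"
  by (induction ts) (auto simp: uz_sum_def)

lemma U_alg_hom_unique:
  assumes "U_alg_hom sh br sa G" and "\<forall>x. G (Gen x) = uz_incl (phi x)"
  shows "G = ueval sa phi"
proof
  show "G t = ueval sa phi t" for t
    using assms by (induction t) (auto simp: U_alg_hom_def)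
qed

lemma ueq_smul_zero: "ueq sh br (Smul 0 s) Zero"
proof -
  note ueq.trans[trans]
  let ?a = "Smul 0 s"
  have double: "ueq sh br ?a (Add ?a ?a)"
    using ueq.add_smul[of sh br 0 0 s] by simp
  have "ueq sh br Zero (Add ?a (Smul (-1) ?a))" by (rule ueq.sym[OF ueq.add_neg])
  also have "ueq sh br \<dots> (Add (Add ?a ?a) (Smul (-1) ?a))"
    by (rule ueq.cong_add[OF double ueq.refl])
  also have "ueq sh br \<dots> (Add ?a (Add ?a (Smul (-1) ?a)))" by (rule ueq.add_assoc)
  also have "ueq sh br \<dots> (Add ?a Zero)" by (rule ueq.cong_add[OF ueq.refl ueq.add_neg])
  also have "ueq sh br \<dots> ?a" by (rule ueq.add_zero)
  finally show ?thesis by (rule ueq.sym)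
qed

lemma ueq_mul_zero: "ueq sh br (Mul s Zero) Zero"
proof -
  note ueq.trans[trans]
  have "ueq sh br (Mul s Zero) (Mul s (Smul 0 Zero))"
    by (rule ueq.cong_mul[OF ueq.refl ueq.sym[OF ueq_smul_zero]])
  also have "ueq sh br \<dots> (Smul 0 (Mul s Zero))" by (rule ueq.mul_smul)
  also have "ueq sh br \<dots> Zero" by (rule ueq_smul_zero)
  finally show ?thesis .
qed

locale lie_rep =
  fixes sh :: "'k::field \<Rightarrow> 'h::ab_group_add \<Rightarrow> 'h"
    and br :: "'h \<Rightarrow> 'h \<Rightarrow> 'h"
    and sa :: "'k \<Rightarrow> 'a::ring \<Rightarrow> 'a"
    and phi :: "'h \<Rightarrow> 'a"
  assumes alg: "nonunital_algebra sa"
    and phi_lin: "Vector_Spaces.linear sh sa phi"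
    and phi_br: "\<And>x y. phi (br x y) = phi x * phi y - phi y * phi x"
begin

sublocale vector_space sa
  using alg unfolding nonunital_algebra_def by blast

lemma scale_mult_left: "sa c x * y = sa c (x * y)"
  and scale_mult_right: "x * sa c y = sa c (x * y)"
  using alg unfolding nonunital_algebra_def by metis+

lemma phi_add: "phi (x + y) = phi x + phi y"
  and phi_scale: "phi (sh c x) = sa c (phi x)"
  using phi_lin unfolding Vector_Spaces.linear_iff by blast+

lemma ueval_ueq: "ueq sh br s t \<Longrightarrow> ueval sa phi s = ueval sa phi t"
  by (induction rule: ueq.induct)
    (auto simp: uz_defs scale_mult_left scale_mult_right algebra_simps phi_add phi_scale phi_br)

lemma ueval_in_gen_subalg: "ueval sa phi t \<in> gen_subalg sa phi"
proof (induction t)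
  case Zero
  have "uz_scale sa 0 uz_one \<in> gen_subalg sa phi"
    by (rule gen_subalg.scale[OF gen_subalg.one])
  then show ?case by (simp add: uz_defs)
qed (auto intro: gen_subalg.intros)

lemma U_alg_hom_ueval: "U_alg_hom sh br sa (ueval sa phi)"
  unfolding U_alg_hom_def using ueval_ueq by auto

end

locale post_lie_rep = lie_rep sh br sa phi
  for sh :: "'k::field \<Rightarrow> 'h::ab_group_add \<Rightarrow> 'h"
    and br :: "'h \<Rightarrow> 'h \<Rightarrow> 'h"
    and sa :: "'k \<Rightarrow> 'a::ring \<Rightarrow> 'a"
    and phi :: "'h \<Rightarrow> 'a" +
  fixes st :: "'h \<Rightarrow> 'h \<Rightarrow> 'h"
    and rhd :: "'a \<Rightarrow> 'a \<Rightarrow> 'a"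
    and S :: "('k, 'h) uterm \<Rightarrow> ('k, 'h) uterm \<Rightarrow> ('k, 'h) uterm"
  assumes rhd_bilin: "bilin sa sa sa rhd"
    and phi_st: "\<And>x y. phi (st x y) = rhd (phi x) (phi y)"
    and rhd_mul_left: "\<And>x y z. x \<in> gen_subalg sa phi \<Longrightarrow> y \<in> gen_subalg sa phi \<Longrightarrow>
       z \<in> uz_incl ` range phi \<Longrightarrow>
       uz_rhd sa rhd (uz_mul sa x y) z
         = uz_add (uz_mul sa (uz_rhd sa rhd x z) y) (uz_mul sa x (uz_rhd sa rhd y z))"
    and rhd_mul_right: "\<And>x y z. x \<in> gen_subalg sa phi \<Longrightarrow> y \<in> gen_subalg sa phi \<Longrightarrow>
       z \<in> uz_incl ` range phi \<Longrightarrow>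
       uz_rhd sa rhd x (uz_mul sa y z)
         = uz_sub (uz_rhd sa rhd (uz_rhd sa rhd x y) z) (uz_rhd sa rhd x (uz_rhd sa rhd y z))"
    and S_ext: "ustar_ext sh br st S"
begin

abbreviation F where "F \<equiv> ueval sa phi"

lemma rhd_add_left: "rhd (x + y) z = rhd x z + rhd y z"
  and rhd_add_right: "rhd z (x + y) = rhd z x + rhd z y"
  and rhd_scale_left: "rhd (sa c x) y = sa c (rhd x y)"
  and rhd_scale_right: "rhd y (sa c x) = sa c (rhd y x)"
  using rhd_bilin unfolding bilin_def Vector_Spaces.linear_iff by blast+

lemma rhd_zero_left [simp]: "rhd 0 y = 0"
  using rhd_add_left[of 0 0 y] by simp

lemma rhd_zero_right [simp]: "rhd y 0 = 0"
  using rhd_add_right[of y 0 0] by simp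

lemmas uz_simps = uz_defs scale_mult_left scale_mult_right algebra_simps
  rhd_add_left rhd_add_right rhd_scale_left rhd_scale_right

lemma star_cong: "ueq sh br f f' \<Longrightarrow> ueq sh br g g' \<Longrightarrow> ueq sh br (S f g) (S f' g')"
  and star_add_left: "ueq sh br (S (Add f f') g) (Add (S f g) (S f' g))"
  and star_add_right: "ueq sh br (S f (Add g g')) (Add (S f g) (S f g'))"
  and star_scale_left: "ueq sh br (S (Smul c f) g) (Smul c (S f g))"
  and star_scale_right: "ueq sh br (S f (Smul c g)) (Smul c (S f g))"
  and star_Gen: "ueq sh br (S (Gen x) (Gen y)) (Gen (st x y))"
  and star_one_right: "ueq sh br (S f One) f"
  and star_one_left: "ueq sh br (S One f) (Smul (ueps f) One)"
  and star_mul_Gen_right: "ueq sh br (S f (Mul g (Gen y)))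
     (Add (S (S f g) (Gen y)) (Smul (-1) (S f (S g (Gen y)))))"
  and star_mul_left: "ueq sh br (S (Mul f g) h) (usum (map (\<lambda>(a, b). Mul (S f a) (S g b)) (ucop h)))"
  and star_star: "ueq sh br (S (S f g) h) (S f (usum (map (\<lambda>(a, b). Mul (S g a) b) (ucop h))))"
  using S_ext unfolding ustar_ext_def by auto

lemma star_zero_left: "ueq sh br (S Zero g) Zero"
proof -
  note ueq.trans[trans]
  have "ueq sh br (S Zero g) (S (Smul 0 Zero) g)"
    by (rule star_cong[OF ueq.sym[OF ueq_smul_zero] ueq.refl])
  also have "ueq sh br \<dots> (Smul 0 (S Zero g))" by (rule star_scale_left)
  also have "ueq sh br \<dots> Zero" by (rule ueq_smul_zero)
  finally show ?thesis .
qed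

lemma star_zero_right: "ueq sh br (S f Zero) Zero"
proof -
  note ueq.trans[trans]
  have "ueq sh br (S f Zero) (S f (Smul 0 Zero))"
    by (rule star_cong[OF ueq.refl ueq.sym[OF ueq_smul_zero]])
  also have "ueq sh br \<dots> (Smul 0 (S f Zero))" by (rule star_scale_right)
  also have "ueq sh br \<dots> Zero" by (rule ueq_smul_zero)
  finally show ?thesis .
qed

lemma star_Gen_udeg: "\<exists>t'. ueq sh br (S t (Gen y)) t' \<and> udeg t' \<le> udeg t"
proof (induction t)
  case (Gen x) then show ?case using star_Gen by fastforce
next
  case One then show ?case using star_one_left by fastforce
next
  case Zero then show ?case using star_zero_left by fastforce
next
  case (Add t1 t2)
  then obtain a b where "ueq sh br (S t1 (Gen y)) a" "udeg a \<le> udeg t1"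
     "ueq sh br (S t2 (Gen y)) b" "udeg b \<le> udeg t2" by blast
  then show ?case using ueq.trans[OF star_add_left ueq.cong_add] by fastforce
next
  case (Smul c t1)
  then obtain a where "ueq sh br (S t1 (Gen y)) a" "udeg a \<le> udeg t1" by blast
  then show ?case using ueq.trans[OF star_scale_left ueq.cong_smul] by fastforce
next
  case (Mul t1 t2)
  then obtain a b where ab: "ueq sh br (S t1 (Gen y)) a" "udeg a \<le> udeg t1"
     "ueq sh br (S t2 (Gen y)) b" "udeg b \<le> udeg t2" by blast
  have "ueq sh br (usum (map (\<lambda>(a, b). Mul (S t1 a) (S t2 b)) (ucop (Gen y))))
     (Add (Mul a t2) (Add (Mul t1 b) Zero))"
    using ab by (auto intro!: ueq.cong_add ueq.cong_mul star_one_right ueq.refl)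
  with ab show ?case
    by (intro exI[of _ "Add (Mul a t2) (Add (Mul t1 b) Zero)"])
      (auto intro: ueq.trans[OF star_mul_left])
qed

definition star_preserved :: "('k, 'h) uterm \<Rightarrow> ('k, 'h) uterm \<Rightarrow> bool" where
  "star_preserved f g \<longleftrightarrow> F (S f g) = uz_rhd sa rhd (F f) (F g)"

lemma star_preserved_ueq_right:
  "star_preserved f g \<Longrightarrow> ueq sh br g g' \<Longrightarrow> star_preserved f g'"
  unfolding star_preserved_def by (metis ueval_ueq star_cong ueq.refl)

lemma star_preserved_zero_left: "star_preserved Zero g"
  and star_preserved_zero_right: "star_preserved f Zero"
  and star_preserved_one_left: "star_preserved One g"
  and star_preserved_one_right: "star_preserved f One"
  unfolding star_preserved_def
  using ueval_ueq[OF star_zero_left] ueval_ueq[OF star_zero_right]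
    ueval_ueq[OF star_one_left, of g] fst_ueval[of sa phi g]
    ueval_ueq[OF star_one_right, of f]
  by (auto simp: uz_simps prod_eq_iff)

lemma star_preserved_add_left: "star_preserved f g \<Longrightarrow> star_preserved f' g \<Longrightarrow> star_preserved (Add f f') g"
  and star_preserved_add_right: "star_preserved f g \<Longrightarrow> star_preserved f g' \<Longrightarrow> star_preserved f (Add g g')"
  and star_preserved_scale_left: "star_preserved f g \<Longrightarrow> star_preserved (Smul c f) g"
  and star_preserved_scale_right: "star_preserved f g \<Longrightarrow> star_preserved f (Smul c g)"
  unfolding star_preserved_def
  using ueval_ueq[OF star_add_left, of f f' g] ueval_ueq[OF star_add_right, of f g g']
    ueval_ueq[OF star_scale_left, of c f g] ueval_ueq[OF star_scale_right, of f c g]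
  by (auto simp: uz_simps)

lemma star_preserved_Gen: "star_preserved f (Gen y)"
proof (induction f)
  case (Gen x)
  show ?case unfolding star_preserved_def
    using ueval_ueq[OF star_Gen, of x y] by (simp add: uz_simps phi_st)
next
  case (Mul f1 f2)
  have "F (S (Mul f1 f2) (Gen y))
      = F (usum (map (\<lambda>(a, b). Mul (S f1 a) (S f2 b)) (ucop (Gen y))))"
    by (rule ueval_ueq[OF star_mul_left])
  also have "\<dots> = uz_add (uz_mul sa (F (S f1 (Gen y))) (F f2)) (uz_mul sa (F f1) (F (S f2 (Gen y))))"
    using ueval_ueq[OF star_one_right] by (simp add: uz_defs)
  also have "\<dots> = uz_rhd sa rhd (F (Mul f1 f2)) (F (Gen y))"
    using Mul.IH rhd_mul_left[OF ueval_in_gen_subalg ueval_in_gen_subalg, of "uz_incl (phi y)" f1 f2]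
    by (simp add: star_preserved_def)
  finally show ?case unfolding star_preserved_def .
qed (auto intro: star_preserved_one_left star_preserved_zero_left
    star_preserved_add_left star_preserved_scale_left)

lemma star_preserved_mul_Gen:
  assumes "\<forall>f. star_preserved f g" and "\<forall>f. star_preserved f (S g (Gen y))"
  shows "star_preserved f (Mul g (Gen y))"
proof -
  have "F (S f (Mul g (Gen y)))
      = uz_add (F (S (S f g) (Gen y))) (uz_scale sa (-1) (F (S f (S g (Gen y)))))"
    using ueval_ueq[OF star_mul_Gen_right, of f g y] by simp
  also have "\<dots> = uz_add (uz_rhd sa rhd (uz_rhd sa rhd (F f) (F g)) (F (Gen y)))
      (uz_scale sa (-1) (uz_rhd sa rhd (F f) (uz_rhd sa rhd (F g) (F (Gen y)))))"
    using star_preserved_Gen[of "S f g" y] star_preserved_Gen[of g y] assms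
    unfolding star_preserved_def by simp
  also have "\<dots> = uz_rhd sa rhd (F f) (F (Mul g (Gen y)))"
    using rhd_mul_right[OF ueval_in_gen_subalg ueval_in_gen_subalg, of "uz_incl (phi y)" f g]
    by (simp add: uz_defs algebra_simps)
  finally show ?thesis unfolding star_preserved_def .
qed

lemma star_preserved_mul:
  assumes lower: "\<And>t f. udeg t < n \<Longrightarrow> star_preserved f t"
  shows "udeg g + udeg g' \<le> n \<Longrightarrow> \<forall>f. star_preserved f g \<Longrightarrow> star_preserved f (Mul g g')"
proof (induction g' arbitrary: g f)
  case (Gen y)
  obtain t where t: "ueq sh br (S g (Gen y)) t" "udeg t \<le> udeg g"
    using star_Gen_udeg by blast
  have "star_preserved f' (S g (Gen y))" for f'
    using lower[of t f'] t Gen.prems(1) star_preserved_ueq_right[OF _ ueq.sym[OF t(1)]] by simp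
  then show ?case using star_preserved_mul_Gen Gen.prems(2) by blast
next
  case One
  then show ?case using star_preserved_ueq_right ueq.sym[OF ueq.mul_one] by blast
next
  case Zero
  show ?case
    using star_preserved_ueq_right[OF star_preserved_zero_right ueq.sym[OF ueq_mul_zero]] .
next
  case (Add a b)
  then have "star_preserved f (Add (Mul g a) (Mul g b))"
    by (auto intro: star_preserved_add_right)
  then show ?case using star_preserved_ueq_right ueq.sym[OF ueq.distl] by blast
next
  case (Smul c a)
  then have "star_preserved f (Smul c (Mul g a))"
    by (auto intro: star_preserved_scale_right)
  then show ?case using star_preserved_ueq_right ueq.sym[OF ueq.mul_smul] by blast
next
  case (Mul a b)
  then have "\<forall>f. star_preserved f (Mul g a)" by auto
  with Mul have "star_preserved f (Mul (Mul g a) b)" by auto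
  then show ?case using star_preserved_ueq_right ueq.mul_assoc by blast
qed

lemma star_preserved_all: "star_preserved f g"
proof -
  have "udeg g \<le> n \<Longrightarrow> star_preserved f g" for n f g
  proof (induction n arbitrary: f g rule: less_induct)
    case (less n)
    from less.prems show ?case
    proof (induction g arbitrary: f)
      case (Mul a b)
      then show ?case
        using star_preserved_mul[of n a b f] less.IH by fastforce
    qed (auto intro: star_preserved_Gen star_preserved_one_right star_preserved_zero_right
        star_preserved_add_right star_preserved_scale_right)
  qed
  then show ?thesis by blast
qed

lemma ueval_star: "F (S f g) = uz_rhd sa rhd (F f) (F g)"
  using star_preserved_all unfolding star_preserved_def .

lemma rhd_mul_ueval:
  "uz_rhd sa rhd (uz_mul sa (F f) (F g)) (F h)
     = uz_sum (map (\<lambda>(a, b). uz_mul sa (uz_rhd sa rhd (F f) (F a)) (uz_rhd sa rhd (F g) (F b))) (ucop h))"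
proof -
  have "uz_rhd sa rhd (uz_mul sa (F f) (F g)) (F h) = F (S (Mul f g) h)"
    by (simp add: ueval_star)
  also have "\<dots> = F (usum (map (\<lambda>(a, b). Mul (S f a) (S g b)) (ucop h)))"
    by (rule ueval_ueq[OF star_mul_left])
  finally show ?thesis by (simp add: ueval_usum o_def split_def ueval_star)
qed

lemma rhd_rhd_ueval:
  "uz_rhd sa rhd (uz_rhd sa rhd (F f) (F g)) (F h)
     = uz_rhd sa rhd (F f) (uz_sum (map (\<lambda>(a, b). uz_mul sa (uz_rhd sa rhd (F g) (F a)) (F b)) (ucop h)))"
proof -
  have "uz_rhd sa rhd (uz_rhd sa rhd (F f) (F g)) (F h) = F (S (S f g) h)"
    by (simp add: ueval_star)
  also have "\<dots> = F (S f (usum (map (\<lambda>(a, b). Mul (S g a) b) (ucop h))))"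
    by (rule ueval_ueq[OF star_star])
  finally show ?thesis by (simp add: ueval_usum o_def split_def ueval_star)
qed

end

theorem theorem3p6:
  fixes sh :: "'k::field \<Rightarrow> 'h::ab_group_add \<Rightarrow> 'h"
    and br st :: "'h \<Rightarrow> 'h \<Rightarrow> 'h"
    and sa :: "'k \<Rightarrow> 'a::ring \<Rightarrow> 'a"
    and rhd :: "'a \<Rightarrow> 'a \<Rightarrow> 'a"
    and phi :: "'h \<Rightarrow> 'a"
    and S :: "('k, 'h) uterm \<Rightarrow> ('k, 'h) uterm \<Rightarrow> ('k, 'h) uterm"
  assumes postlie: "right_post_lie sh br st"
    and alg: "nonunital_algebra sa"
    and rhd_bilin: "bilin sa sa sa rhd"
    and phi_lin: "Vector_Spaces.linear sh sa phi"
    and phi_br: "\<And>x y. phi (br x y) = phi x * phi y - phi y * phi x"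
    and phi_st: "\<And>x y. phi (st x y) = rhd (phi x) (phi y)"
    and hyp1: "\<And>x y z. x \<in> gen_subalg sa phi \<Longrightarrow> y \<in> gen_subalg sa phi \<Longrightarrow>
       z \<in> uz_incl ` range phi \<Longrightarrow>
       uz_rhd sa rhd (uz_mul sa x y) z
         = uz_add (uz_mul sa (uz_rhd sa rhd x z) y) (uz_mul sa x (uz_rhd sa rhd y z))"
    and hyp2: "\<And>x y z. x \<in> gen_subalg sa phi \<Longrightarrow> y \<in> gen_subalg sa phi \<Longrightarrow>
       z \<in> uz_incl ` range phi \<Longrightarrow>
       uz_rhd sa rhd x (uz_mul sa y z)
         = uz_sub (uz_rhd sa rhd (uz_rhd sa rhd x y) z) (uz_rhd sa rhd x (uz_rhd sa rhd y z))"
    and S_ext: "ustar_ext sh br st S"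
  shows "(\<exists>!F. U_alg_hom sh br sa F \<and> (\<forall>x. F (Gen x) = uz_incl (phi x))) \<and>
    (\<forall>F. U_alg_hom sh br sa F \<and> (\<forall>x. F (Gen x) = uz_incl (phi x)) \<longrightarrow>
      (\<forall>f g. F (S f g) = uz_rhd sa rhd (F f) (F g)) \<and>
      (\<forall>f g h. uz_rhd sa rhd (uz_mul sa (F f) (F g)) (F h)
          = uz_sum (map (\<lambda>(a, b). uz_mul sa (uz_rhd sa rhd (F f) (F a)) (uz_rhd sa rhd (F g) (F b)))
                        (ucop h))) \<and>
      (\<forall>f g h. uz_rhd sa rhd (uz_rhd sa rhd (F f) (F g)) (F h)
          = uz_rhd sa rhd (F f)
              (uz_sum (map (\<lambda>(a, b). uz_mul sa (uz_rhd sa rhd (F g) (F a)) (F b)) (ucop h)))))"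
proof -
  interpret post_lie_rep sh br sa phi st rhd S
    by (intro post_lie_rep.intro lie_rep.intro post_lie_rep_axioms.intro)
      (fact alg phi_lin phi_br rhd_bilin phi_st hyp1 hyp2 S_ext)+
  have unique: "G = ueval sa phi"
    if "U_alg_hom sh br sa G \<and> (\<forall>x. G (Gen x) = uz_incl (phi x))" for G
    using that U_alg_hom_unique by blast
  show ?thesis
  proof (intro conjI allI impI)
    show "\<exists>!F. U_alg_hom sh br sa F \<and> (\<forall>x. F (Gen x) = uz_incl (phi x))"
      using U_alg_hom_ueval unique by (intro ex1I[of _ "ueval sa phi"]) simp_all
  qed (use unique ueval_star rhd_mul_ueval rhd_rhd_ueval in metis)+
qed

end
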